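(* Let $f:\mathit{Ref}\to\mathit{Expr}$ be a well-formed spreadsheet and let $\mathcal{L}=\{l : l \text{ is a label used in } f(r) \text{ for some } r\in\mathit{Ref}\}$. Then there are $|\mathcal{L}|$ or fewer random variables that cover all random variables used by the executions of $f$; i.e., every random draw made during any execution of $f$ (from the empty state $\emptyset$ to a state with domain $\mathit{Ref}$) is the draw at some labelled application whose label belongs to $\mathcal{L}$, and each such label is used for at most one draw per execution.
   Context: Expressions of the abstract spreadsheet language are generated by the grammar $$e ::= c \mid r \mid \mathit{op}_l(e_1,\dots,e_n) \mid \mathbf{if}\; e_1\, e_2\, e_3 \mid \mathbf{obs}(c, \mathit{erp}_l(e_1,\dots,e_n)),\qquad \mathit{op} ::= \mathit{prim} \mid \mathit{black} \mid \mathit{erp},$$ where $c$ ranges over constant numbers, $r$ over cell references, $l$ over labels (each application carries a unique label), $\mathit{prim}$ over deterministic primitive operators, $\mathit{black}$ over user-defined (possibly stochastic) black-box operators, and $\mathit{erp}$ over elementary random procedures (Gaussian, Choice, Between, Near). A spreadsheet is a finite map $f:\mathit{Ref}\to\mathit{Expr}$; it is well-formed if the directed graph on $\mathit{Ref}$ with edges $\{(r,r'): r\text{ occurs in } f(r')\}$ is acyclic. Fix a topological enumeration of $\mathit{Ref}$ and write $\prec$ for its order. A state $\rho$ is a map from a $\prec$-downward-closed subset $\mathrm{dom}(\rho)\subseteq\mathit{Ref}$ to numbers. Evaluation $e\Downarrow_\rho c,(p,q,\Lambda,L)$ evaluates expression $e$ in state $\rho$ to a number $c$, with $L$ the sequence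 of labels of the applications at which random values were sampled or observed: a reference $r$ evaluates to $\rho(r)$ with $L=[]$; $\mathit{prim}_l(e_1,\dots,e_n)$ evaluates the arguments and applies $\mathit{prim}$, with $L$ the concatenation of the arguments' sequences; $\mathit{black}_l(e_1,\dots,e_n)$ evaluates the arguments, samples $c\sim\mathit{black}(c_1,\dots,c_n)$, and has $L=\mathit{concat}(L_1,\dots,L_n,[l])$; $\mathit{erp}_l(e_1,\dots,e_n)$ evaluates the arguments, samples $c$ from a proposal distribution associated with $l$, and has $L=\mathit{concat}(L_1,\dots,L_n,[l])$; $\mathbf{if}\;e_1\,e_2\,e_3$ evaluates $e_1$ and then $e_2$ if the result is nonzero, otherwise $e_3$, with $L$ the concatenation of the two evaluated subexpressions' sequences; $\mathbf{obs}(c,\mathit{erp}_l(e_1,\dots,e_n))$ evaluates the arguments, returns $c$ and has $L=\mathit{concat}(L_1,\dots,L_n,[l])$. (The components $p,q$ are accumulated log densities and $\Lambda$ gradient information.) A one-step spreadsheet evaluation $\rho\xrightarrow{p,q,\Lambda,L}_f\rho'$ picks the $\prec$-least $r\in\mathit{Ref}\setminus\mathrm{dom}(\rho)$, evaluates $f(r)\Downarrow_\rho c,(p,q,\Lambda,L)$, and sets $\rho'=\rho[r:c]$. An execution of $f$ is a sequence $\emptyset=\rho_1\xrightarrow{}_f\rho_2\cdots\xrightarrow{}_f\rho_{m+1}$ with $\mathrm{dom}(\rho_{m+1})=\mathit{Ref}$; the random variables it uses are those sampled at the labels in the recorded sequences $L_1,\dots,L_m$. *)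

theory Defs
  imports Complex_Main
begin

text \<open>Expressions of the abstract spreadsheet language.
  'r: cell references, 'l: labels, 'p: primitive operators,
  'b: black-box operators, 'e: elementary random procedures.\<close>
datatype ('r, 'l, 'p, 'b, 'e) expr =
    Const real
  | Ref 'r
  | Prim 'p 'l "('r, 'l, 'p, 'b, 'e) expr list"
  | Black 'b 'l "('r, 'l, 'p, 'b, 'e) expr list"
  | Erp 'e 'l "('r, 'l, 'p, 'b, 'e) expr list"
  | If "('r, 'l, 'p, 'b, 'e) expr" "('r, 'l, 'p, 'b, 'e) expr" "('r, 'l, 'p, 'b, 'e) expr"
  | Obs real 'e 'l "('r, 'l, 'p, 'b, 'e) expr list"

fun refs :: "('r, 'l, 'p, 'b, 'e) expr \<Rightarrow> 'r set" where
  "refs (Const c) = {}"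
| "refs (Ref r) = {r}"
| "refs (Prim p l es) = (\<Union>e\<in>set es. refs e)"
| "refs (Black b l es) = (\<Union>e\<in>set es. refs e)"
| "refs (Erp d l es) = (\<Union>e\<in>set es. refs e)"
| "refs (If e1 e2 e3) = refs e1 \<union> refs e2 \<union> refs e3"
| "refs (Obs c d l es) = (\<Union>e\<in>set es. refs e)"

fun labels :: "('r, 'l, 'p, 'b, 'e) expr \<Rightarrow> 'l list" where
  "labels (Const c) = []"
| "labels (Ref r) = []"
| "labels (Prim p l es) = concat (map labels es) @ [l]"
| "labels (Black b l es) = concat (map labels es) @ [l]"
| "labels (Erp d l es) = concat (map labels es) @ [l]"
| "labels (If e1 e2 e3) = labels e1 @ labels e2 @ labels e3"
| "labels (Obs c d l es) = concat (map labels es) @ [l]"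

definition dep_graph :: "('r \<Rightarrow> ('r, 'l, 'p, 'b, 'e) expr) \<Rightarrow> ('r \<times> 'r) set" where
  "dep_graph f = {(r, r'). r \<in> refs (f r')}"

definition well_formed :: "('r \<Rightarrow> ('r, 'l, 'p, 'b, 'e) expr) \<Rightarrow> bool" where
  "well_formed f \<longleftrightarrow> acyclic (dep_graph f)"

definition unique_labels :: "('r::finite \<Rightarrow> ('r, 'l, 'p, 'b, 'e) expr) \<Rightarrow> bool" where
  "unique_labels f \<longleftrightarrow>
     (\<forall>r. distinct (labels (f r))) \<and>
     (\<forall>r r'. r \<noteq> r' \<longrightarrow> set (labels (f r)) \<inter> set (labels (f r')) = {})"

definition used_labels :: "('r \<Rightarrow> ('r, 'l, 'p, 'b, 'e) expr) \<Rightarrow> 'l set" where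
  "used_labels f = (\<Union>r. set (labels (f r)))"

definition topo_enum :: "('r \<Rightarrow> ('r, 'l, 'p, 'b, 'e) expr) \<Rightarrow> 'r list \<Rightarrow> bool" where
  "topo_enum f ord \<longleftrightarrow> distinct ord \<and> set ord = UNIV \<and>
     (\<forall>r r'. r \<in> refs (f r') \<longrightarrow>
        (\<exists>i j. i < j \<and> j < length ord \<and> ord ! i = r \<and> ord ! j = r'))"

text \<open>Big-step evaluation  e \<Down>_\<rho> c, L  (only the value and the label sequence are
  tracked; the log densities and gradient information do not influence L).
  Random samples (black-box and ERP proposals) may be arbitrary reals; prim gives the
  semantics of the deterministic primitive operators.\<close>
inductive eval :: "('p \<Rightarrow> real list \<Rightarrow> real) \<Rightarrow> ('r \<rightharpoonup> real) \<Rightarrow> ('r, 'l, 'p, 'b, 'e) expr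
                    \<Rightarrow> real \<Rightarrow> 'l list \<Rightarrow> bool"
  and evals :: "('p \<Rightarrow> real list \<Rightarrow> real) \<Rightarrow> ('r \<rightharpoonup> real) \<Rightarrow> ('r, 'l, 'p, 'b, 'e) expr list
                    \<Rightarrow> real list \<Rightarrow> 'l list list \<Rightarrow> bool"
  for prim :: "'p \<Rightarrow> real list \<Rightarrow> real" and \<rho> :: "'r \<rightharpoonup> real"
where
  ev_const: "eval prim \<rho> (Const c) c []"
| ev_ref: "\<rho> r = Some c \<Longrightarrow> eval prim \<rho> (Ref r) c []"
| ev_prim: "evals prim \<rho> es cs Ls \<Longrightarrow> eval prim \<rho> (Prim p l es) (prim p cs) (concat Ls)"
| ev_black: "evals prim \<rho> es cs Ls \<Longrightarrow> eval prim \<rho> (Black b l es) c (concat Ls @ [l])"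
| ev_erp: "evals prim \<rho> es cs Ls \<Longrightarrow> eval prim \<rho> (Erp d l es) c (concat Ls @ [l])"
| ev_if_true: "eval prim \<rho> e1 c1 L1 \<Longrightarrow> c1 \<noteq> 0 \<Longrightarrow> eval prim \<rho> e2 c2 L2
                 \<Longrightarrow> eval prim \<rho> (If e1 e2 e3) c2 (L1 @ L2)"
| ev_if_false: "eval prim \<rho> e1 c1 L1 \<Longrightarrow> c1 = 0 \<Longrightarrow> eval prim \<rho> e3 c3 L3
                 \<Longrightarrow> eval prim \<rho> (If e1 e2 e3) c3 (L1 @ L3)"
| ev_obs: "evals prim \<rho> es cs Ls \<Longrightarrow> eval prim \<rho> (Obs c d l es) c (concat Ls @ [l])"
| evs_nil: "evals prim \<rho> [] [] []"
| evs_cons: "eval prim \<rho> e c L \<Longrightarrow> evals prim \<rho> es cs Ls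
              \<Longrightarrow> evals prim \<rho> (e # es) (c # cs) (L # Ls)"

definition step :: "('p \<Rightarrow> real list \<Rightarrow> real) \<Rightarrow> ('r \<Rightarrow> ('r, 'l, 'p, 'b, 'e) expr) \<Rightarrow> 'r list
                    \<Rightarrow> ('r \<rightharpoonup> real) \<Rightarrow> 'l list \<Rightarrow> ('r \<rightharpoonup> real) \<Rightarrow> bool" where
  "step prim f ord \<rho> L \<rho>' \<longleftrightarrow>
     (\<exists>r c. find (\<lambda>x. x \<notin> dom \<rho>) ord = Some r \<and> eval prim \<rho> (f r) c L \<and> \<rho>' = \<rho>(r \<mapsto> c))"

definition execution :: "('p \<Rightarrow> real list \<Rightarrow> real) \<Rightarrow> ('r \<Rightarrow> ('r, 'l, 'p, 'b, 'e) expr) \<Rightarrow> 'r list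
                    \<Rightarrow> ('r \<rightharpoonup> real) list \<Rightarrow> 'l list list \<Rightarrow> bool" where
  "execution prim f ord \<rho>s Ls \<longleftrightarrow>
     length \<rho>s = Suc (length Ls) \<and> \<rho>s ! 0 = Map.empty \<and>
     (\<forall>i < length Ls. step prim f ord (\<rho>s ! i) (Ls ! i) (\<rho>s ! Suc i)) \<and>
     dom (last \<rho>s) = UNIV"

end

theory Submission
  imports Defs "HOL-Library.Sublist"
begin

text \<open>Evaluating an expression records labels only at applications that actually fire, in
  evaluation order, and every application is visited at most once; so the recorded sequence is
  a subsequence of the labels of the expression. A step of the spreadsheet evaluates the formula
  of one fresh cell, and the cells evaluated along an execution are pairwise distinct, since each
  cell stays defined once it is. Unique labelling makes the label lists of distinct cells
  disjoint and duplicate-free, hence the concatenation of all recorded sequences is a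
  duplicate-free list of labels of the spreadsheet.\<close>

lemma subseq_set_subset: "subseq xs ys \<Longrightarrow> set xs \<subseteq> set ys"
  by (metis subseq_conv_nths set_nths_subset)

lemma subseq_distinct: "subseq xs ys \<Longrightarrow> distinct ys \<Longrightarrow> distinct xs"
  by (metis subseq_conv_nths distinct_nthsI)

lemma set_concat_subset_if_subseqs:
  assumes "list_all2 (\<lambda>xs a. subseq xs (g a)) xss as"
  shows "set (concat xss) \<subseteq> (\<Union>a\<in>set as. set (g a))"
  using assms by induction (auto dest: subseq_set_subset)

lemma distinct_concat_if_subseqs:
  assumes "list_all2 (\<lambda>xs a. subseq xs (g a)) xss as" and "distinct as"
    and "\<And>a. distinct (g a)"
    and "\<And>a b. a \<noteq> b \<Longrightarrow> set (g a) \<inter> set (g b) = {}"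
  shows "distinct (concat xss)"
  using assms(1,2)
proof induction
  case (Cons xs xss a as)
  have "distinct xs"
    using subseq_distinct[OF Cons.hyps(1) assms(3)] .
  moreover have "set xs \<inter> set (concat xss) = {}"
  proof -
    have "set (g a) \<inter> set (g b) = {}" if "b \<in> set as" for b
      using assms(4) that Cons.prems by (metis distinct.simps(2))
    then show ?thesis
      using subseq_set_subset[OF Cons.hyps(1)] set_concat_subset_if_subseqs[OF Cons.hyps(2)]
      by blast
  qed
  ultimately show ?case using Cons by simp
qed simp

lemma eval_labels_subseq:
  fixes e :: "('r, 'l, 'p, 'b, 'e) expr" and es :: "('r, 'l, 'p, 'b, 'e) expr list"
  shows "eval prim \<rho> e c L \<Longrightarrow> subseq L (labels e)"
    and "evals prim \<rho> es cs Ls \<Longrightarrow> subseq (concat Ls) (concat (map labels es))"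
proof (induction rule: eval_evals.inducts)
  case (ev_if_true e1 c1 L1 e2 c2 L2 e3)
  then have "subseq L2 (labels e2 @ labels e3)"
    by (metis append_Nil2 list_emb_append_mono list_emb_Nil)
  with ev_if_true show ?case by (simp add: list_emb_append_mono)
next
  case (ev_if_false e1 c1 L1 e3 c3 L3 e2)
  then have "subseq L3 (labels e2 @ labels e3)"
    by (metis list_emb_append2)
  with ev_if_false show ?case by (simp add: list_emb_append_mono)
qed (auto simp: list_emb_append_mono subseq_append')

lemma step_evaluates_fresh_cell:
  assumes "step prim f ord \<rho> L \<rho>'"
  obtains r where "r \<notin> dom \<rho>" and "dom \<rho>' = insert r (dom \<rho>)"
    and "subseq L (labels (f r))"
  using assms eval_labels_subseq(1) unfolding step_def by (force simp: find_Some_iff)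

lemma execution_evaluates_distinct_cells:
  assumes "execution prim f ord \<rho>s Ls"
  obtains rs where "distinct rs" and "list_all2 (\<lambda>L r. subseq L (labels (f r))) Ls rs"
proof -
  have steps: "\<And>i. i < length Ls \<Longrightarrow> step prim f ord (\<rho>s ! i) (Ls ! i) (\<rho>s ! Suc i)"
    using assms unfolding execution_def by blast
  have "\<exists>r. r \<notin> dom (\<rho>s ! i) \<and> dom (\<rho>s ! Suc i) = insert r (dom (\<rho>s ! i))
      \<and> subseq (Ls ! i) (labels (f r))" if "i < length Ls" for i
    using step_evaluates_fresh_cell[OF steps[OF that]] by metis
  then obtain R where R: "\<And>i. i < length Ls \<Longrightarrow> R i \<notin> dom (\<rho>s ! i)
      \<and> dom (\<rho>s ! Suc i) = insert (R i) (dom (\<rho>s ! i)) \<and> subseq (Ls ! i) (labels (f (R i)))"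
    by metis
  have dom_mono: "dom (\<rho>s ! i) \<subseteq> dom (\<rho>s ! j)" if "i \<le> j" "j \<le> length Ls" for i j
    by (rule lift_Suc_mono_le_ivl[of "{..<length Ls}"]) (use R that in auto)
  have "R i \<noteq> R j" if "i < j" "j < length Ls" for i j
    using R[of i] R[of j] dom_mono[of "Suc i" j] that by auto
  then have "inj_on R {..<length Ls}"
    by (metis inj_onI lessThan_iff linorder_neq_iff)
  then have "distinct (map R [0..<length Ls])"
    by (simp add: distinct_map atLeast0LessThan)
  moreover have "list_all2 (\<lambda>L r. subseq L (labels (f r))) Ls (map R [0..<length Ls])"
    using R by (simp add: list_all2_conv_all_nth)
  ultimately show ?thesis using that by blast
qed

theorem mainTheorem2:
  fixes f :: "'r::finite \<Rightarrow> ('r, 'l, 'p, 'b, 'e) expr"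
    and ord :: "'r list"
    and prim :: "'p \<Rightarrow> real list \<Rightarrow> real"
  assumes "well_formed f"
    and "unique_labels f"
    and "topo_enum f ord"
    and "execution prim f ord \<rho>s Ls"
  shows "set (concat Ls) \<subseteq> used_labels f \<and> distinct (concat Ls)
         \<and> length (concat Ls) \<le> card (used_labels f)"
proof -
  obtain rs where rs: "distinct rs" "list_all2 (\<lambda>L r. subseq L (labels (f r))) Ls rs"
    using execution_evaluates_distinct_cells[OF assms(4)] .
  have used: "set (concat Ls) \<subseteq> used_labels f"
    using set_concat_subset_if_subseqs[OF rs(2)] unfolding used_labels_def by blast
  have distinct: "distinct (concat Ls)"
    using distinct_concat_if_subseqs[OF rs(2,1)] assms(2) unfolding unique_labels_def by blast
  have "length (concat Ls) = card (set (concat Ls))"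
    using distinct_card[OF distinct] by simp
  also have "\<dots> \<le> card (used_labels f)"
    using used by (simp add: card_mono used_labels_def)
  finally show ?thesis using used distinct by blast
qed

end
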